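(* Let $d\geq 3$ and let $P_d(t)=\sum_{n\geq 1}a_n t^n$, where $a_n$ is the number of directed plateau polyhypercubes of dimension $d$ (of any width $k\geq 1$) with lateral area $n$. Then $$P_d(t)=\frac{t^{d-1}(1-t)^{d-1}}{(1-t)^{2(d-1)}-t^{d-1}}.$$
   Context: Work in $\mathbb{Z}^d$ with orthonormal coordinate system $(0,\vec{i_1},\dots,\vec{i_d})$; a cell is a unit hypercube of the lattice. A polyhypercube of dimension $d$ is a finite union of cells, connected through their $(d-1)$-dimensional faces, defined up to translation. Its width is the number of distinct values of the $\vec{i_1}$-coordinate taken by its cells; its strata are its intersections with the layers of constant $\vec{i_1}$-coordinate. A plateau is a stratum that is a hyperrectangle. An elementary step is a positive move of one unit along one axis. A polyhypercube is directed if every cell can be reached from a distinguished root cell by a path of cells of the polyhypercube using only elementary steps. A directed plateau polyhypercube is a directed polyhypercube all of whose strata are plateaus. The lateral area of a polyhypercube is the sum, over $2\leq l\leq d$, of the areas (numbers of unit squares) of the polyominoes obtained by projecting it onto the planes $(\vec{i_1},\vec{i_l})$. Generating functions are formal power series in $t$. *)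

theory Defs
  imports "HOL-Computational_Algebra.Formal_Power_Series"
begin

text \<open>Cells of Z^d are represented as functions nat => int vanishing outside {0..<d}.
  Coordinate 0 plays the role of the first axis i_1; coordinate l (1 <= l < d)
  corresponds to i_{l+1}.\<close>

definition cells :: "nat \<Rightarrow> (nat \<Rightarrow> int) set" where
  "cells d = {x. \<forall>i. d \<le> i \<longrightarrow> x i = 0}"

definition unit_vec :: "nat \<Rightarrow> nat \<Rightarrow> int" where
  "unit_vec i = (\<lambda>j. if j = i then 1 else 0)"

definition step :: "nat \<Rightarrow> (nat \<Rightarrow> int) \<Rightarrow> (nat \<Rightarrow> int)" where
  "step i x = (\<lambda>j. x j + unit_vec i j)"

definition adjacent :: "nat \<Rightarrow> (nat \<Rightarrow> int) \<Rightarrow> (nat \<Rightarrow> int) \<Rightarrow> bool" where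
  "adjacent d x y \<longleftrightarrow> (\<exists>i<d. y = step i x \<or> x = step i y)"

definition polyhypercube :: "nat \<Rightarrow> (nat \<Rightarrow> int) set \<Rightarrow> bool" where
  "polyhypercube d P \<longleftrightarrow> finite P \<and> P \<noteq> {} \<and> P \<subseteq> cells d \<and>
     (\<forall>x\<in>P. \<forall>y\<in>P. (\<lambda>a b. a \<in> P \<and> b \<in> P \<and> adjacent d a b)\<^sup>*\<^sup>* x y)"

definition directed :: "nat \<Rightarrow> (nat \<Rightarrow> int) set \<Rightarrow> bool" where
  "directed d P \<longleftrightarrow> polyhypercube d P \<and>
     (\<exists>r\<in>P. \<forall>x\<in>P. (\<lambda>a b. a \<in> P \<and> b \<in> P \<and> (\<exists>i<d. b = step i a))\<^sup>*\<^sup>* r x)"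

definition stratum :: "(nat \<Rightarrow> int) set \<Rightarrow> int \<Rightarrow> (nat \<Rightarrow> int) set" where
  "stratum P c = {x \<in> P. x 0 = c}"

definition is_plateau :: "nat \<Rightarrow> int \<Rightarrow> (nat \<Rightarrow> int) set \<Rightarrow> bool" where
  "is_plateau d c S \<longleftrightarrow> (\<exists>a b :: nat \<Rightarrow> int.
     S = {x \<in> cells d. x 0 = c \<and> (\<forall>l. 1 \<le> l \<and> l < d \<longrightarrow> a l \<le> x l \<and> x l \<le> b l)})"

definition directed_plateau :: "nat \<Rightarrow> (nat \<Rightarrow> int) set \<Rightarrow> bool" where
  "directed_plateau d P \<longleftrightarrow> directed d P \<and>
     (\<forall>c \<in> (\<lambda>x. x 0) ` P. is_plateau d c (stratum P c))"

definition lateral_area :: "nat \<Rightarrow> (nat \<Rightarrow> int) set \<Rightarrow> nat" where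
  "lateral_area d P = (\<Sum>l\<in>{1..<d}. card ((\<lambda>x. (x 0, x l)) ` P))"

definition translate :: "(nat \<Rightarrow> int) \<Rightarrow> (nat \<Rightarrow> int) set \<Rightarrow> (nat \<Rightarrow> int) set" where
  "translate v P = (\<lambda>x. (\<lambda>j. x j + v j)) ` P"

definition trans_class :: "nat \<Rightarrow> (nat \<Rightarrow> int) set \<Rightarrow> (nat \<Rightarrow> int) set set" where
  "trans_class d P = {Q. \<exists>v\<in>cells d. Q = translate v P}"

definition dpp_count :: "nat \<Rightarrow> nat \<Rightarrow> nat" where
  "dpp_count d n = card (trans_class d ` {P. directed_plateau d P \<and> lateral_area d P = n})"

end

(* A directed plateau polyhypercube, translated so that its root is the origin, is determined
   by its width k and, for every lateral axis l, the list of the k intervals onto which its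
   plateaus project along l.  The first interval starts at 0 and each further one starts
   inside the previous one, because the lower corner of a plateau can only be entered from the
   plateau below it; conversely every such family of lists describes a directed plateau
   polyhypercube.  The axes are independent and the lateral area is the total length of the
   intervals, so the polyhypercubes of width k are counted by a (d-1)-th power: along one axis
   the first interval [0, b] contributes t/(1-t), and each further interval, determined by
   the length of the previous one and its own starting point in it, contributes t/(1-t)^2.
   Summing the resulting geometric series over k gives the closed form. *)

theory Submission
  imports Defs
begin

unbundle fps_syntax

section \<open>Generating functions of weighted sets\<close>

definition finite_fibres :: "'a set \<Rightarrow> ('a \<Rightarrow> nat) \<Rightarrow> bool" where
  "finite_fibres A w \<longleftrightarrow> (\<forall>n. finite {a \<in> A. w a = n})"

text \<open>Meaningful only for finite fibres: an infinite fibre has cardinality \<open>0\<close>.\<close>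

definition weight_gf :: "'a set \<Rightarrow> ('a \<Rightarrow> nat) \<Rightarrow> 'b :: semiring_1 fps" where
  "weight_gf A w = Abs_fps (\<lambda>n. of_nat (card {a \<in> A. w a = n}))"

lemma weight_gf_nth: "weight_gf A w $ n = of_nat (card {a \<in> A. w a = n})"
  by (simp add: weight_gf_def)

lemma bij_betw_weight_fibres:
  assumes "bij_betw f A B" and "\<And>a. a \<in> A \<Longrightarrow> v (f a) = w a"
  shows "bij_betw f {a \<in> A. w a = n} {b \<in> B. v b = n}"
  by (rule bij_betw_subset[OF assms(1)]) (use assms in \<open>auto simp: bij_betw_def\<close>)

lemma
  assumes "bij_betw f A B" and "\<And>a. a \<in> A \<Longrightarrow> v (f a) = w a"
  shows finite_fibres_bij_betw: "finite_fibres B v \<longleftrightarrow> finite_fibres A w"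
    and weight_gf_bij_betw: "weight_gf B v = weight_gf A w"
  using bij_betw_finite[OF bij_betw_weight_fibres[of f A B v w, OF assms]]
    bij_betw_same_card[OF bij_betw_weight_fibres[of f A B v w, OF assms]]
  by (auto simp: finite_fibres_def fps_eq_iff weight_gf_nth)

lemma
  assumes "finite_fibres A w" and "finite_fibres B v"
  shows finite_fibres_Times: "finite_fibres (A \<times> B) (\<lambda>(a, b). w a + v b)"
    and weight_gf_Times:
      "weight_gf (A \<times> B) (\<lambda>(a, b). w a + v b) =
        (weight_gf A w :: 'c::comm_semiring_1 fps) * weight_gf B v"
proof -
  have fibre: "{p \<in> A \<times> B. (\<lambda>(a, b). w a + v b) p = n} =
      (\<Union>i\<le>n. {a \<in> A. w a = i} \<times> {b \<in> B. v b = n - i})" for n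
    by auto
  then show "finite_fibres (A \<times> B) (\<lambda>(a, b). w a + v b)"
    using assms by (simp add: finite_fibres_def)
  show "weight_gf (A \<times> B) (\<lambda>(a, b). w a + v b) = weight_gf A w * weight_gf B v"
  proof (rule fps_ext)
    fix n
    have "card {p \<in> A \<times> B. (\<lambda>(a, b). w a + v b) p = n} =
        (\<Sum>i\<le>n. card {a \<in> A. w a = i} * card {b \<in> B. v b = n - i})"
      unfolding fibre
      by (subst card_UN_disjoint)
        (use assms in \<open>auto simp: finite_fibres_def card_cartesian_product\<close>)
    then show "weight_gf (A \<times> B) (\<lambda>(a, b). w a + v b) $ n = (weight_gf A w * weight_gf B v) $ n"
      by (simp add: weight_gf_nth fps_mult_nth atLeast0AtMost)
  qed
qed

lemma
  assumes "finite I" and "finite_fibres A w"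
  shows finite_fibres_PiE: "finite_fibres (Pi\<^sub>E I (\<lambda>_. A)) (\<lambda>f. \<Sum>i\<in>I. w (f i))"
    and weight_gf_PiE: "weight_gf (Pi\<^sub>E I (\<lambda>_. A)) (\<lambda>f. \<Sum>i\<in>I. w (f i)) =
      (weight_gf A w :: 'b::comm_semiring_1 fps) ^ card I"
proof -
  have "finite_fibres (Pi\<^sub>E I (\<lambda>_. A)) (\<lambda>f. \<Sum>i\<in>I. w (f i)) \<and>
        weight_gf (Pi\<^sub>E I (\<lambda>_. A)) (\<lambda>f. \<Sum>i\<in>I. w (f i)) = (weight_gf A w :: 'b fps) ^ card I"
    using assms(1)
  proof (induction I rule: finite_induct)
    case empty
    have "{f \<in> Pi\<^sub>E {} (\<lambda>_. A). (\<Sum>i\<in>{}. w (f i)) = n} =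
        (if n = 0 then {\<lambda>_. undefined} else {})" for n
      by auto
    then show ?case
      by (auto simp: finite_fibres_def fps_eq_iff weight_gf_nth)
  next
    case (insert x I)
    have bij: "bij_betw (\<lambda>(y, g). g(x := y)) (A \<times> Pi\<^sub>E I (\<lambda>_. A)) (Pi\<^sub>E (insert x I) (\<lambda>_. A))"
      using inj_combinator[OF insert.hyps(2), of "\<lambda>_. A"] by (simp add: bij_betw_def PiE_insert_eq)
    have weight: "(\<Sum>i\<in>insert x I. w ((\<lambda>(y, g). g(x := y)) p i)) =
        (\<lambda>(y, g). w y + (\<Sum>i\<in>I. w (g i))) p"
      if "p \<in> A \<times> Pi\<^sub>E I (\<lambda>_. A)" for p
      using insert.hyps by (cases p) (auto intro!: sum.cong)
    from insert.IH have IH: "finite_fibres (Pi\<^sub>E I (\<lambda>_. A)) (\<lambda>g. \<Sum>i\<in>I. w (g i))"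
      "weight_gf (Pi\<^sub>E I (\<lambda>_. A)) (\<lambda>g. \<Sum>i\<in>I. w (g i)) = (weight_gf A w :: 'b fps) ^ card I"
      by blast+
    note transfer = finite_fibres_bij_betw weight_gf_bij_betw
    note transfer = transfer[OF bij, where v = "\<lambda>f. \<Sum>i\<in>insert x I. w (f i)"
        and w = "\<lambda>(y, g). w y + (\<Sum>i\<in>I. w (g i))", OF weight]
    have "finite_fibres (Pi\<^sub>E (insert x I) (\<lambda>_. A)) (\<lambda>f. \<Sum>i\<in>insert x I. w (f i))"
      using transfer(1) finite_fibres_Times[OF assms(2) IH(1)] by simp
    moreover have "weight_gf (Pi\<^sub>E (insert x I) (\<lambda>_. A)) (\<lambda>f. \<Sum>i\<in>insert x I. w (f i)) =
        (weight_gf (A \<times> Pi\<^sub>E I (\<lambda>_. A)) (\<lambda>(y, g). w y + (\<Sum>i\<in>I. w (g i))) :: 'b fps)"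
      using transfer(2) .
    ultimately show ?case
      using weight_gf_Times[OF assms(2) IH(1), where 'c = 'b] IH(2) insert.hyps by simp
  qed
  then show "finite_fibres (Pi\<^sub>E I (\<lambda>_. A)) (\<lambda>f. \<Sum>i\<in>I. w (f i))"
    and "weight_gf (Pi\<^sub>E I (\<lambda>_. A)) (\<lambda>f. \<Sum>i\<in>I. w (f i)) = (weight_gf A w :: 'b fps) ^ card I"
    by blast+
qed

section \<open>A geometric series of formal power series\<close>

lemma fps_mult_nth_cong:
  assumes "\<And>i. i \<le> n \<Longrightarrow> f $ i = g $ i"
  shows "(f * h) $ n = (g * h) $ n"
  unfolding fps_mult_nth by (rule sum.cong) (use assms in auto)

lemma fps_mult_power_nth_eq_0:
  fixes A B :: "'a::comm_ring_1 fps"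
  assumes "A $ 0 = 0" and "B $ 0 = 0" and "i \<le> j"
  shows "(A * B ^ j) $ i = 0"
proof -
  have "A $ m * (B ^ j) $ (i - m) = 0" if "m \<le> i" for m
    using assms that startsby_zero_power_prefix[OF assms(2), of j] by (cases m) auto
  then show ?thesis
    by (simp add: fps_mult_nth)
qed

text \<open>As \<open>A\<close> and \<open>B\<close> have no constant term, only the terms \<open>j < n\<close> of \<open>\<Sum>j. A B\<^sup>j\<close> contribute
  to its \<open>n\<close>-th coefficient.\<close>

lemma fps_geometric_series_times:
  fixes A B :: "'a::comm_ring_1 fps"
  assumes "A $ 0 = 0" and "B $ 0 = 0"
  shows "Abs_fps (\<lambda>n. \<Sum>j<n. (A * B ^ j) $ n) * (1 - B) = A"
proof (rule fps_ext)
  fix n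
  define S where "S = (\<Sum>j<Suc n. A * B ^ j)"
  have "Abs_fps (\<lambda>n. \<Sum>j<n. (A * B ^ j) $ n) $ i = S $ i" if "i \<le> n" for i
  proof -
    have "(\<Sum>j<i. (A * B ^ j) $ i) = (\<Sum>j<Suc n. (A * B ^ j) $ i)"
      by (rule sum.mono_neutral_left) (use that in \<open>auto intro: fps_mult_power_nth_eq_0[OF assms]\<close>)
    then show ?thesis
      by (simp add: S_def fps_sum_nth)
  qed
  then have "(Abs_fps (\<lambda>n. \<Sum>j<n. (A * B ^ j) $ n) * (1 - B)) $ n = (S * (1 - B)) $ n"
    by (rule fps_mult_nth_cong)
  also have "S * (1 - B) = A * ((\<Sum>j<Suc n. B ^ j) * (1 - B))"
    by (simp only: S_def sum_distrib_left[symmetric] mult.assoc)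
  also have "\<dots> = A * (1 - B ^ Suc n)"
    by (simp only: one_diff_power_eq[of B "Suc n"] mult.commute[of _ "1 - B"])
  also have "\<dots> = A - A * B ^ Suc n"
    by (simp add: right_diff_distrib)
  also have "(A - A * B ^ Suc n) $ n = A $ n"
    using fps_mult_power_nth_eq_0[OF assms, of n "Suc n"] by simp
  finally show "(Abs_fps (\<lambda>n. \<Sum>j<n. (A * B ^ j) $ n) * (1 - B)) $ n = A $ n" .
qed

lemma fps_geometric_series_closed_form:
  fixes A B :: "'a::field fps"
  assumes "0 < m" and A: "A * (1 - fps_X) ^ m = fps_X ^ m"
    and B: "B * (1 - fps_X) ^ (2 * m) = fps_X ^ m"
  shows "Abs_fps (\<lambda>n. \<Sum>j<n. (A * B ^ j) $ n) =
    fps_X ^ m * (1 - fps_X) ^ m / ((1 - fps_X) ^ (2 * m) - fps_X ^ m)"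
proof -
  define T where "T = Abs_fps (\<lambda>n. \<Sum>j<n. (A * B ^ j) $ n)"
  define D :: "'a fps" where "D = (1 - fps_X) ^ (2 * m) - fps_X ^ m"
  have "A $ 0 = 0" "B $ 0 = 0"
    using arg_cong[OF A, of "\<lambda>f. f $ 0"] arg_cong[OF B, of "\<lambda>f. f $ 0"] \<open>0 < m\<close>
    by (simp_all add: fps_nth_power_0)
  then have "T * (1 - B) = A"
    unfolding T_def by (rule fps_geometric_series_times)
  have "T * D = T * (1 - B) * (1 - fps_X) ^ (2 * m)"
    unfolding D_def B[symmetric] by (simp add: left_diff_distrib mult.assoc)
  also have "\<dots> = A * (1 - fps_X) ^ m * (1 - fps_X) ^ m"
    using \<open>T * (1 - B) = A\<close> by (simp add: mult_2 power_add mult.assoc)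
  finally have "T * D = fps_X ^ m * (1 - fps_X) ^ m"
    by (simp only: A)
  moreover have "D \<noteq> 0"
    using \<open>0 < m\<close> by (auto simp: D_def fps_eq_iff fps_nth_power_0 dest: spec[of _ 0])
  ultimately have "T = fps_X ^ m * (1 - fps_X) ^ m / D"
    using fps_divide_times_eq[of D T] by simp
  then show ?thesis
    unfolding T_def D_def .
qed

section \<open>Profiles: chains of intervals\<close>

definition interval_chain :: "(int \<times> int) list \<Rightarrow> bool" where
  "interval_chain ps \<longleftrightarrow>
     (\<forall>p \<in> set ps. fst p \<le> snd p) \<and> successively (\<lambda>p q. fst p \<le> fst q \<and> fst q \<le> snd p) ps"

definition profiles :: "nat \<Rightarrow> (int \<times> int) list set" where
  "profiles k = {ps. length ps = k \<and> interval_chain ps \<and> fst (hd ps) = 0}"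

definition profile_area :: "(int \<times> int) list \<Rightarrow> nat" where
  "profile_area ps = (\<Sum>p \<leftarrow> ps. nat (snd p - fst p + 1))"

definition nested_pairs :: "(nat \<times> nat) set" where
  "nested_pairs = {(b, a). a \<le> b}"

definition shift_intervals :: "int \<Rightarrow> (int \<times> int) list \<Rightarrow> (int \<times> int) list" where
  "shift_intervals s = map (\<lambda>(a, b). (a + s, b + s))"

lemma successively_iff_nth:
  "successively P xs \<longleftrightarrow> (\<forall>i. Suc i < length xs \<longrightarrow> P (xs ! i) (xs ! Suc i))"
proof (induction P xs rule: successively.induct)
  case (3 P x y xs)
  have "(\<forall>i. Suc i < length (x # y # xs) \<longrightarrow> P ((x # y # xs) ! i) ((x # y # xs) ! Suc i)) \<longleftrightarrow>
      P x y \<and> (\<forall>i. Suc i < length (y # xs) \<longrightarrow> P ((y # xs) ! i) ((y # xs) ! Suc i))"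
    by (auto simp: less_Suc_eq_0_disj)
  with 3 show ?case by simp
qed simp_all

lemma interval_chain_iff_nth:
  "interval_chain ps \<longleftrightarrow> (\<forall>i < length ps. fst (ps ! i) \<le> snd (ps ! i)) \<and>
     (\<forall>i. Suc i < length ps \<longrightarrow> fst (ps ! i) \<le> fst (ps ! Suc i) \<and> fst (ps ! Suc i) \<le> snd (ps ! i))"
  by (auto simp: interval_chain_def successively_iff_nth all_set_conv_all_nth)

lemma interval_chain_Cons_Cons [simp]:
  "interval_chain ((a, b) # (a', b') # ps) \<longleftrightarrow>
     a \<le> b \<and> a \<le> a' \<and> a' \<le> b \<and> interval_chain ((a', b') # ps)"
  by (auto simp: interval_chain_def)

lemma shift_intervals_Cons:
  "shift_intervals s ((a, b) # ps) = (a + s, b + s) # shift_intervals s ps"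
  by (simp add: shift_intervals_def)

lemma length_shift_intervals [simp]: "length (shift_intervals s ps) = length ps"
  by (simp add: shift_intervals_def)

lemma interval_chain_shift [simp]: "interval_chain (shift_intervals s ps) \<longleftrightarrow> interval_chain ps"
  by (simp add: interval_chain_def shift_intervals_def successively_map case_prod_unfold)

lemma profile_area_shift [simp]: "profile_area (shift_intervals s ps) = profile_area ps"
  by (simp add: profile_area_def shift_intervals_def comp_def case_prod_unfold)

lemma length_le_profile_area:
  assumes "interval_chain ps"
  shows "length ps \<le> profile_area ps"
proof -
  have "\<forall>p \<in> set ps. fst p \<le> snd p"
    using assms by (simp add: interval_chain_def)
  then show ?thesis
    unfolding profile_area_def by (induction ps) auto
qed

lemma bij_betw_profiles_1: "bij_betw (\<lambda>b. [(0, int b)]) UNIV (profiles 1)"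
  by (rule bij_betw_byWitness[where f' = "\<lambda>ps. nat (snd (hd ps))"])
    (auto simp: profiles_def interval_chain_def length_Suc_conv)

text \<open>A profile of length \<open>k + 2\<close> is its first interval \<open>[0, b]\<close>, the start \<open>a \<in> [0, b]\<close> of its
  second interval, and the rest of the profile shifted to start at \<open>0\<close>.\<close>

lemma bij_betw_profiles_Suc_Suc:
  "bij_betw (\<lambda>((b, a), qs). (0, int b) # shift_intervals (int a) qs)
     (nested_pairs \<times> profiles (Suc k)) (profiles (Suc (Suc k)))"
  (is "bij_betw ?f ?A ?B")
proof -
  define g where
    "g ps = ((nat (snd (hd ps)), nat (fst (ps ! 1))), shift_intervals (- fst (ps ! 1)) (tl ps))"
    for ps
  show ?thesis
  proof (rule bij_betw_byWitness[where f' = g])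
    show "\<forall>x \<in> ?A. g (?f x) = x"
      by (auto simp: g_def nested_pairs_def profiles_def length_Suc_conv shift_intervals_def
          comp_def case_prod_unfold)
    show "\<forall>ps \<in> ?B. ?f (g ps) = ps"
      by (auto simp: g_def profiles_def length_Suc_conv shift_intervals_def
          comp_def case_prod_unfold)
    show "?f ` ?A \<subseteq> ?B"
    proof clarify
      fix b a :: nat and qs
      assume "(b, a) \<in> nested_pairs" "qs \<in> profiles (Suc k)"
      then have "a \<le> b"
        by (simp add: nested_pairs_def)
      from \<open>qs \<in> profiles (Suc k)\<close> obtain c r
        where qs: "qs = (0, c) # r" "interval_chain qs" "length r = k"
        by (auto simp: profiles_def length_Suc_conv)
      then have "interval_chain (shift_intervals (int a) qs)"
        by simp
      with \<open>a \<le> b\<close> qs show "(0, int b) # shift_intervals (int a) qs \<in> ?B"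
        by (simp add: profiles_def shift_intervals_Cons)
    qed
    show "g ` ?B \<subseteq> ?A"
    proof
      fix x
      assume "x \<in> g ` ?B"
      then obtain b a c r where ps: "x = g ((0, b) # (a, c) # r)"
        "interval_chain ((0, b) # (a, c) # r)" "length r = k"
        by (auto simp: profiles_def length_Suc_conv)
      then have "interval_chain (shift_intervals (- a) ((a, c) # r))"
        by simp
      with ps show "x \<in> ?A"
        by (simp add: g_def nested_pairs_def profiles_def shift_intervals_Cons nat_mono)
    qed
  qed
qed

lemma fps_times_one_minus_X_nth:
  "(f * (1 - fps_X)) $ n = f $ n - (if n = 0 then 0 else f $ (n - 1))"
  for f :: "'a::comm_ring_1 fps"
  by (simp add: algebra_simps)

lemma
  shows finite_fibres_Suc: "finite_fibres (UNIV :: nat set) Suc"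
    and weight_gf_Suc_nth:
      "(weight_gf (UNIV :: nat set) Suc :: 'a::semiring_1 fps) $ n = (if n = 0 then 0 else 1)"
proof -
  have fibre: "{b \<in> UNIV. Suc b = n} = (if n = 0 then {} else {n - 1})" for n
    by auto
  then show "finite_fibres (UNIV :: nat set) Suc"
    by (simp add: finite_fibres_def)
  show "(weight_gf (UNIV :: nat set) Suc :: 'a fps) $ n = (if n = 0 then 0 else 1)"
    by (simp only: weight_gf_nth fibre) simp
qed

lemma weight_gf_Suc:
  "(weight_gf (UNIV :: nat set) Suc :: 'a::comm_ring_1 fps) * (1 - fps_X) = fps_X"
  by (rule fps_ext) (simp add: fps_times_one_minus_X_nth weight_gf_Suc_nth)

lemma
  shows finite_fibres_nested_pair: "finite_fibres nested_pairs (Suc \<circ> fst)"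
    and weight_gf_nested_pair_nth:
      "(weight_gf nested_pairs (Suc \<circ> fst) :: 'a::semiring_1 fps) $ n = of_nat n"
proof -
  have fibre: "{p \<in> nested_pairs. (Suc \<circ> fst) p = n} =
      (if n = 0 then {} else {n - 1} \<times> {..n - 1})" for n
    by (auto simp: nested_pairs_def)
  then show "finite_fibres nested_pairs (Suc \<circ> fst)"
    by (simp add: finite_fibres_def)
  show "(weight_gf nested_pairs (Suc \<circ> fst) :: 'a fps) $ n = of_nat n"
    by (simp only: weight_gf_nth fibre) simp
qed

lemma weight_gf_nested_pair:
  "(weight_gf nested_pairs (Suc \<circ> fst) :: 'a::comm_ring_1 fps) * (1 - fps_X) ^ 2 = fps_X"
proof -
  have "(weight_gf nested_pairs (Suc \<circ> fst) :: 'a fps) * (1 - fps_X) =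
      weight_gf (UNIV :: nat set) Suc"
    by (rule fps_ext)
      (simp add: fps_times_one_minus_X_nth weight_gf_nested_pair_nth weight_gf_Suc_nth of_nat_diff)
  then show ?thesis
    by (simp add: power2_eq_square mult.assoc[symmetric] weight_gf_Suc)
qed

lemma
  shows finite_fibres_profiles: "finite_fibres (profiles (Suc k)) profile_area"
    and weight_gf_profiles: "weight_gf (profiles (Suc k)) profile_area =
      (weight_gf UNIV Suc :: 'a::comm_semiring_1 fps) * weight_gf nested_pairs (Suc \<circ> fst) ^ k"
proof (induction k)
  case 0
  have area: "profile_area [(0, int b)] = Suc b" for b
    by (simp add: profile_area_def)
  note transfer = finite_fibres_bij_betw weight_gf_bij_betw
  note transfer = transfer[OF bij_betw_profiles_1, where v = profile_area and w = Suc, OF area]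
  show "finite_fibres (profiles (Suc 0)) profile_area"
    using transfer(1) finite_fibres_Suc by simp
  show "weight_gf (profiles (Suc 0)) profile_area =
      (weight_gf UNIV Suc :: 'a fps) * weight_gf nested_pairs (Suc \<circ> fst) ^ 0"
    using transfer(2) by simp
next
  case (Suc k)
  have area: "profile_area ((\<lambda>((b, a), qs). (0, int b) # shift_intervals (int a) qs) x) =
      (\<lambda>(p, qs). (Suc \<circ> fst) p + profile_area qs) x" for x
    using profile_area_shift by (auto simp: profile_area_def case_prod_unfold)
  note transfer = finite_fibres_bij_betw weight_gf_bij_betw
  note transfer = transfer[OF bij_betw_profiles_Suc_Suc, where v = profile_area
      and w = "\<lambda>(p, qs). (Suc \<circ> fst) p + profile_area qs", OF area]
  show "finite_fibres (profiles (Suc (Suc k))) profile_area"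
    using transfer(1) finite_fibres_Times[OF finite_fibres_nested_pair Suc.IH(1)] by simp
  have "weight_gf (profiles (Suc (Suc k))) profile_area =
      (weight_gf (nested_pairs \<times> profiles (Suc k))
        (\<lambda>(p, qs). (Suc \<circ> fst) p + profile_area qs) :: 'a fps)"
    by (rule transfer(2))
  also have "\<dots> =
      weight_gf nested_pairs (Suc \<circ> fst) * weight_gf (profiles (Suc k)) profile_area"
    by (rule weight_gf_Times[OF finite_fibres_nested_pair Suc.IH(1)])
  finally show "weight_gf (profiles (Suc (Suc k))) profile_area =
      (weight_gf UNIV Suc :: 'a fps) * weight_gf nested_pairs (Suc \<circ> fst) ^ Suc k"
    unfolding Suc.IH(2) by (simp only: power_Suc mult_ac)
qed

definition directed_step :: "nat \<Rightarrow> (nat \<Rightarrow> int) set \<Rightarrow> (nat \<Rightarrow> int) \<Rightarrow> (nat \<Rightarrow> int) \<Rightarrow> bool" where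
  "directed_step d P = (\<lambda>a b. a \<in> P \<and> b \<in> P \<and> (\<exists>i<d. b = step i a))"

definition adjacent_in :: "nat \<Rightarrow> (nat \<Rightarrow> int) set \<Rightarrow> (nat \<Rightarrow> int) \<Rightarrow> (nat \<Rightarrow> int) \<Rightarrow> bool" where
  "adjacent_in d P = (\<lambda>a b. a \<in> P \<and> b \<in> P \<and> adjacent d a b)"

lemma polyhypercube_iff:
  "polyhypercube d P \<longleftrightarrow>
     finite P \<and> P \<noteq> {} \<and> P \<subseteq> cells d \<and> (\<forall>x\<in>P. \<forall>y\<in>P. (adjacent_in d P)\<^sup>*\<^sup>* x y)"
  by (simp add: polyhypercube_def adjacent_in_def)

lemma directed_iff:
  "directed d P \<longleftrightarrow> polyhypercube d P \<and> (\<exists>r\<in>P. \<forall>x\<in>P. (directed_step d P)\<^sup>*\<^sup>* r x)"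
  by (simp add: directed_def directed_step_def)

lemma step_apply: "step i a j = a j + (if j = i then 1 else 0)"
  by (simp add: step_def unit_vec_def)

lemma directed_path_mono: "(directed_step d P)\<^sup>*\<^sup>* r x \<Longrightarrow> r j \<le> x j"
  by (induction rule: rtranclp_induct) (auto simp: directed_step_def step_apply)

text \<open>A directed path raises the first coordinate by at most one per step, so it meets every
  intermediate layer.\<close>

lemma directed_path_meets_layer:
  assumes "(directed_step d P)\<^sup>*\<^sup>* r x" and "r \<in> P" and "r 0 \<le> c" and "c \<le> x 0"
  shows "\<exists>y\<in>P. y 0 = c"
  using assms
proof (induction arbitrary: c rule: rtranclp_induct)
  case (step y z)
  show ?case
  proof (cases "c \<le> y 0")
    case True
    then show ?thesis using step by blast
  next
    case False
    from step.hyps(2) have "z \<in> P" "z 0 \<le> y 0 + 1"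
      by (auto simp: directed_step_def step_apply)
    with False step.prems have "z 0 = c"
      by linarith
    with \<open>z \<in> P\<close> show ?thesis
      by blast
  qed
qed auto

lemma connected_if_directed_from_root:
  assumes "\<forall>x\<in>P. (directed_step d P)\<^sup>*\<^sup>* r x" and "x \<in> P" and "y \<in> P"
  shows "(adjacent_in d P)\<^sup>*\<^sup>* x y"
proof -
  have sub: "(directed_step d P)\<^sup>*\<^sup>* \<le> (adjacent_in d P)\<^sup>*\<^sup>*"
    by (rule rtranclp_mono) (auto simp: directed_step_def adjacent_in_def adjacent_def)
  have "symp (adjacent_in d P)\<^sup>*\<^sup>*"
    by (rule symp_rtranclp) (auto simp: symp_def adjacent_in_def adjacent_def)
  then have "(adjacent_in d P)\<^sup>*\<^sup>* x r"
    using sub assms(1,2) by (auto dest: sympD)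
  moreover have "(adjacent_in d P)\<^sup>*\<^sup>* r y"
    using sub assms(1,3) by auto
  ultimately show ?thesis
    by (rule rtranclp_trans)
qed

lemma finite_cells_box: "finite {x \<in> cells d. \<forall>j<d. a j \<le> x j \<and> x j \<le> b j}"
proof (rule finite_subset)
  show "{x \<in> cells d. \<forall>j<d. a j \<le> x j \<and> x j \<le> b j} \<subseteq>
      (\<lambda>f j. if j < d then f j else 0) ` Pi\<^sub>E {..<d} (\<lambda>j. {a j..b j})"
  proof
    fix x
    assume x: "x \<in> {x \<in> cells d. \<forall>j<d. a j \<le> x j \<and> x j \<le> b j}"
    then have "x = (\<lambda>j. if j < d then restrict x {..<d} j else 0)"
      by (auto simp: cells_def)
    moreover have "restrict x {..<d} \<in> Pi\<^sub>E {..<d} (\<lambda>j. {a j..b j})"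
      using x by auto
    ultimately show "x \<in> (\<lambda>f j. if j < d then f j else 0) ` Pi\<^sub>E {..<d} (\<lambda>j. {a j..b j})"
      by blast
  qed
qed (simp add: finite_PiE)

lemma directed_path_in_box:
  assumes "y \<in> cells d" and "x \<in> cells d" and "\<forall>j. y j \<le> x j"
    and "\<And>z. z \<in> cells d \<Longrightarrow> \<forall>j. y j \<le> z j \<and> z j \<le> x j \<Longrightarrow> z \<in> Q"
  shows "(directed_step d Q)\<^sup>*\<^sup>* y x"
  using assms
proof (induction "nat (\<Sum>j<d. x j - y j)" arbitrary: y rule: less_induct)
  case less
  show ?case
  proof (cases "y = x")
    case False
    then obtain i where i: "y i \<noteq> x i"
      by auto
    with less.prems(1,2) have "i < d"
      by (cases "i < d") (auto simp: cells_def)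
    with i less.prems(3) have "y i < x i"
      using order_le_neq_trans by blast
    define y' where "y' = step i y"
    have y': "y' \<in> cells d" "\<forall>j. y' j \<le> x j"
      using less.prems(1,3) \<open>i < d\<close> \<open>y i < x i\<close> by (auto simp: y'_def cells_def step_apply)
    have "(\<Sum>j<d. x j - y' j) < (\<Sum>j<d. x j - y j)"
      by (rule sum_strict_mono_ex1) (use \<open>i < d\<close> in \<open>auto simp: y'_def step_apply\<close>)
    moreover have "0 \<le> (\<Sum>j<d. x j - y' j)"
      using y' by (simp add: sum_nonneg)
    moreover have "z \<in> Q" if "z \<in> cells d" "\<forall>j. y' j \<le> z j \<and> z j \<le> x j" for z
    proof -
      have "y j \<le> y' j" for j
        by (simp add: y'_def step_apply)
      with that show ?thesis
        using less.prems(4) order_trans by blast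
    qed
    ultimately have "(directed_step d Q)\<^sup>*\<^sup>* y' x"
      using y' less.prems(2) by (intro less.hyps[of y']) auto
    moreover have "directed_step d Q y y'"
      using less.prems y' \<open>i < d\<close>
      by (auto simp: directed_step_def y'_def step_apply intro!: order_trans)
    ultimately show ?thesis
      by (meson converse_rtranclp_into_rtranclp)
  qed simp
qed

section \<open>Stacks of plateaus\<close>

definition corner :: "nat \<Rightarrow> int \<Rightarrow> (nat \<Rightarrow> int) \<Rightarrow> nat \<Rightarrow> int" where
  "corner d c f = (\<lambda>j. if j = 0 then c else if j < d then f j else 0)"

definition plateau_stack :: "nat \<Rightarrow> nat \<Rightarrow> (nat \<Rightarrow> (int \<times> int) list) \<Rightarrow> (nat \<Rightarrow> int) set" where
  "plateau_stack d k pss = {x \<in> cells d. 0 \<le> x 0 \<and> x 0 < int k \<and>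
     (\<forall>l \<in> {1..<d}. fst (pss l ! nat (x 0)) \<le> x l \<and> x l \<le> snd (pss l ! nat (x 0)))}"

text \<open>\<open>Pi\<^sub>E\<close> makes the profile family undefined off the lateral axes, so that distinct stacks
  give distinct polyhypercubes.\<close>

definition stacks :: "nat \<Rightarrow> (nat \<times> (nat \<Rightarrow> (int \<times> int) list)) set" where
  "stacks d = (SIGMA k:{1..}. Pi\<^sub>E {1..<d} (\<lambda>_. profiles k))"

definition stack_area :: "nat \<Rightarrow> (nat \<Rightarrow> (int \<times> int) list) \<Rightarrow> nat" where
  "stack_area d pss = (\<Sum>l \<in> {1..<d}. profile_area (pss l))"

abbreviation lower_corner :: "nat \<Rightarrow> (nat \<Rightarrow> (int \<times> int) list) \<Rightarrow> nat \<Rightarrow> nat \<Rightarrow> int" where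
  "lower_corner d pss c \<equiv> corner d (int c) (\<lambda>l. fst (pss l ! c))"

abbreviation upper_corner :: "nat \<Rightarrow> (nat \<Rightarrow> (int \<times> int) list) \<Rightarrow> nat \<Rightarrow> nat \<Rightarrow> int" where
  "upper_corner d pss c \<equiv> corner d (int c) (\<lambda>l. snd (pss l ! c))"

lemma corner_in_plateau_stack_iff:
  assumes "0 < d"
  shows "corner d (int c) f \<in> plateau_stack d k pss \<longleftrightarrow>
    c < k \<and> (\<forall>l \<in> {1..<d}. fst (pss l ! c) \<le> f l \<and> f l \<le> snd (pss l ! c))"
  using assms by (auto simp: corner_def plateau_stack_def cells_def)

lemma plateau_stack_subset_cells: "plateau_stack d k pss \<subseteq> cells d"
  by (auto simp: plateau_stack_def)

lemma directed_path_in_plateau_stack: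
  assumes y: "y \<in> plateau_stack d k pss" and x: "x \<in> plateau_stack d k pss"
    and "y 0 = x 0" and "\<forall>j. y j \<le> x j"
  shows "(directed_step d (plateau_stack d k pss))\<^sup>*\<^sup>* y x"
proof (rule directed_path_in_box)
  fix z
  assume z: "z \<in> cells d" "\<forall>j. y j \<le> z j \<and> z j \<le> x j"
  with \<open>y 0 = x 0\<close> have z0: "z 0 = x 0"
    by (metis order_antisym)
  have "fst (pss l ! nat (z 0)) \<le> z l \<and> z l \<le> snd (pss l ! nat (z 0))"
    if "l \<in> {1..<d}" for l
  proof -
    have "fst (pss l ! nat (z 0)) \<le> y l" "x l \<le> snd (pss l ! nat (z 0))"
      using that y x z0 \<open>y 0 = x 0\<close> by (simp_all add: plateau_stack_def)
    with z(2) show ?thesis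
      by (meson order_trans)
  qed
  with x z z0 show "z \<in> plateau_stack d k pss"
    by (simp add: plateau_stack_def)
qed (use assms in \<open>auto simp: plateau_stack_def\<close>)

context
  fixes d k :: nat and pss :: "nat \<Rightarrow> (int \<times> int) list"
  assumes stack: "(k, pss) \<in> stacks d" and dim: "0 < d"
begin

lemma stack_width: "0 < k"
  using stack by (simp add: stacks_def)

lemma stack_profile: "l \<in> {1..<d} \<Longrightarrow> pss l \<in> profiles k"
  using stack by (auto simp: stacks_def)

lemma stack_lower_le_upper:
  "c < k \<Longrightarrow> l \<in> {1..<d} \<Longrightarrow> fst (pss l ! c) \<le> snd (pss l ! c)"
  using stack_profile by (simp add: profiles_def interval_chain_iff_nth)

lemma stack_lower_0: "l \<in> {1..<d} \<Longrightarrow> fst (pss l ! 0) = 0"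
  using stack_profile[of l] stack_width by (cases "pss l") (auto simp: profiles_def)

lemma stack_lower_Suc:
  "Suc c < k \<Longrightarrow> l \<in> {1..<d} \<Longrightarrow>
     fst (pss l ! c) \<le> fst (pss l ! Suc c) \<and> fst (pss l ! Suc c) \<le> snd (pss l ! c)"
  using stack_profile by (simp add: profiles_def interval_chain_iff_nth)

lemma lower_corner_in_stack: "c < k \<Longrightarrow> lower_corner d pss c \<in> plateau_stack d k pss"
  using dim stack_lower_le_upper by (simp add: corner_in_plateau_stack_iff)

lemma upper_corner_in_stack: "c < k \<Longrightarrow> upper_corner d pss c \<in> plateau_stack d k pss"
  using dim stack_lower_le_upper by (simp add: corner_in_plateau_stack_iff)

lemma lower_corner_0: "corner d 0 (\<lambda>l. fst (pss l ! 0)) = (\<lambda>_. 0)"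
  using stack_lower_0 by (auto simp: corner_def fun_eq_iff)

text \<open>Climbing from one plateau to the next: inside plateau \<open>c\<close> go up to the cell below the
  lower corner of plateau \<open>c + 1\<close>, which lies in plateau \<open>c\<close> because each interval starts within
  the previous one, then step along the first axis.\<close>

lemma directed_path_to_lower_corner:
  "c < k \<Longrightarrow> (directed_step d (plateau_stack d k pss))\<^sup>*\<^sup>* (\<lambda>_. 0) (lower_corner d pss c)"
proof (induction c)
  case 0
  then show ?case
    using lower_corner_0 by simp
next
  case (Suc c)
  define q where "q = corner d (int c) (\<lambda>l. fst (pss l ! Suc c))"
  have q: "q \<in> plateau_stack d k pss"
    using Suc.prems dim stack_lower_Suc by (auto simp: q_def corner_in_plateau_stack_iff)
  have "(directed_step d (plateau_stack d k pss))\<^sup>*\<^sup>* (lower_corner d pss c) q"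
    using Suc.prems lower_corner_in_stack q stack_lower_Suc
    by (intro directed_path_in_plateau_stack) (auto simp: q_def corner_def)
  moreover have "step 0 q = lower_corner d pss (Suc c)"
    by (auto simp: fun_eq_iff step_apply q_def corner_def)
  then have "directed_step d (plateau_stack d k pss) q (lower_corner d pss (Suc c))"
    using q lower_corner_in_stack[OF Suc.prems] dim by (auto simp: directed_step_def)
  ultimately show ?case
    using Suc by (meson Suc_lessD rtranclp.rtrancl_into_rtrancl rtranclp_trans)
qed

lemma directed_path_in_stack:
  assumes "x \<in> plateau_stack d k pss"
  shows "(directed_step d (plateau_stack d k pss))\<^sup>*\<^sup>* (\<lambda>_. 0) x"
proof -
  define c where "c = nat (x 0)"
  have c: "c < k" "int c = x 0"
    using assms by (auto simp: plateau_stack_def c_def)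
  have "lower_corner d pss c j \<le> x j" for j
    using assms c by (auto simp: corner_def plateau_stack_def cells_def c_def[symmetric])
  then have "(directed_step d (plateau_stack d k pss))\<^sup>*\<^sup>* (lower_corner d pss c) x"
    by (intro directed_path_in_plateau_stack[OF lower_corner_in_stack[OF c(1)] assms])
      (use c in \<open>auto simp: corner_def\<close>)
  with directed_path_to_lower_corner[OF c(1)] show ?thesis
    by (rule rtranclp_trans)
qed

lemma zero_in_stack: "(\<lambda>_. 0) \<in> plateau_stack d k pss"
  using lower_corner_in_stack[OF stack_width] lower_corner_0 by simp

lemma stack_nonneg: "x \<in> plateau_stack d k pss \<Longrightarrow> 0 \<le> x j"
  using directed_path_mono[OF directed_path_in_stack] by force

lemma finite_stack: "finite (plateau_stack d k pss)"
proof (rule finite_subset)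
  show "plateau_stack d k pss \<subseteq> (\<Union>c<k. {x \<in> cells d. \<forall>j<d.
      lower_corner d pss c j \<le> x j \<and> x j \<le> upper_corner d pss c j})"
  proof
    fix x
    assume x: "x \<in> plateau_stack d k pss"
    then have "nat (x 0) < k" "int (nat (x 0)) = x 0"
      by (auto simp: plateau_stack_def)
    with x show "x \<in> (\<Union>c<k. {x \<in> cells d. \<forall>j<d.
        lower_corner d pss c j \<le> x j \<and> x j \<le> upper_corner d pss c j})"
      by (auto simp: plateau_stack_def corner_def intro!: bexI[of _ "nat (x 0)"])
  qed
qed (simp add: finite_cells_box)

lemma directed_plateau_stack: "directed_plateau d (plateau_stack d k pss)"
proof -
  have "\<forall>x \<in> plateau_stack d k pss. \<forall>y \<in> plateau_stack d k pss.
      (adjacent_in d (plateau_stack d k pss))\<^sup>*\<^sup>* x y"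
    using directed_path_in_stack by (blast intro: connected_if_directed_from_root)
  then have "polyhypercube d (plateau_stack d k pss)"
    using finite_stack zero_in_stack plateau_stack_subset_cells by (auto simp: polyhypercube_iff)
  then have "directed d (plateau_stack d k pss)"
    unfolding directed_iff using zero_in_stack directed_path_in_stack by blast
  moreover have "is_plateau d c (stratum (plateau_stack d k pss) c)"
    if "c \<in> (\<lambda>x. x 0) ` plateau_stack d k pss" for c
    unfolding is_plateau_def
    by (rule exI[of _ "\<lambda>l. fst (pss l ! nat c)"], rule exI[of _ "\<lambda>l. snd (pss l ! nat c)"])
      (use that in \<open>auto simp: stratum_def plateau_stack_def\<close>)
  ultimately show ?thesis
    by (simp add: directed_plateau_def)
qed

lemma projection_stack:
  assumes l: "l \<in> {1..<d}"
  shows "(\<lambda>x. (x 0, x l)) ` plateau_stack d k pss =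
    (\<lambda>(c, y). (int c, y)) ` (SIGMA c:{..<k}. {fst (pss l ! c)..snd (pss l ! c)})"
    (is "?proj = ?boxes")
proof
  show "?proj \<subseteq> ?boxes"
  proof clarify
    fix x
    assume x: "x \<in> plateau_stack d k pss"
    then have "nat (x 0) < k" "int (nat (x 0)) = x 0"
      by (auto simp: plateau_stack_def)
    with x l show "(x 0, x l) \<in> ?boxes"
      by (auto simp: plateau_stack_def intro!: image_eqI[of _ _ "(nat (x 0), x l)"])
  qed
  show "?boxes \<subseteq> ?proj"
  proof clarify
    fix c y
    assume cy: "c < k" "y \<in> {fst (pss l ! c)..snd (pss l ! c)}"
    define x where "x = corner d (int c) ((\<lambda>l. fst (pss l ! c))(l := y))"
    have "x \<in> plateau_stack d k pss"
      using cy l dim stack_lower_le_upper by (auto simp: x_def corner_in_plateau_stack_iff)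
    moreover have "(int c, y) = (x 0, x l)"
      using l by (simp add: x_def corner_def)
    ultimately show "(int c, y) \<in> ?proj"
      by blast
  qed
qed

lemma lateral_area_stack: "lateral_area d (plateau_stack d k pss) = stack_area d pss"
  unfolding lateral_area_def stack_area_def
proof (rule sum.cong[OF refl])
  fix l
  assume l: "l \<in> {1..<d}"
  have "card ((\<lambda>x. (x 0, x l)) ` plateau_stack d k pss) =
      card (SIGMA c:{..<k}. {fst (pss l ! c)..snd (pss l ! c)})"
    unfolding projection_stack[OF l] by (rule card_image) (auto simp: inj_on_def)
  also have "\<dots> = (\<Sum>c<k. nat (snd (pss l ! c) - fst (pss l ! c) + 1))"
    by simp
  also have "\<dots> = profile_area (pss l)"
    using stack_profile[OF l]
    by (simp add: profile_area_def profiles_def sum_list_sum_nth atLeast0LessThan)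
  finally show "card ((\<lambda>x. (x 0, x l)) ` plateau_stack d k pss) = profile_area (pss l)" .
qed

end

text \<open>Width and profiles are read off from the corners of the plateaus.\<close>

lemma plateau_stack_inj:
  assumes stack: "(k, pss) \<in> stacks d" and stack': "(k', pss') \<in> stacks d" and dim: "0 < d"
    and eq: "plateau_stack d k pss = plateau_stack d k' pss'"
  shows "k = k' \<and> pss = pss'"
proof -
  note corner_in = corner_in_plateau_stack_iff[OF dim]
  have "k \<le> k'" if st: "(k, pss) \<in> stacks d"
    and eq: "plateau_stack d k pss = plateau_stack d k' pss'" for k k' pss pss'
  proof -
    obtain j where j: "k = Suc j"
      using stack_width[OF st dim] gr0_implies_Suc by blast
    then have "lower_corner d pss j \<in> plateau_stack d k' pss'"
      using lower_corner_in_stack[OF st dim, of j] eq by simp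
    with j show ?thesis
      by (simp add: corner_in)
  qed
  then have k: "k = k'"
    using stack stack' eq by (metis order_antisym)
  have "pss l ! c = pss' l ! c" if l: "l \<in> {1..<d}" and c: "c < k" for l c
  proof -
    have "lower_corner d pss c \<in> plateau_stack d k pss'"
      "upper_corner d pss c \<in> plateau_stack d k pss'"
      "lower_corner d pss' c \<in> plateau_stack d k pss"
      "upper_corner d pss' c \<in> plateau_stack d k pss"
      using lower_corner_in_stack[OF stack dim c] upper_corner_in_stack[OF stack dim c]
        lower_corner_in_stack[OF stack' dim, of c] upper_corner_in_stack[OF stack' dim, of c] c eq k
      by simp_all
    with l show ?thesis
      unfolding corner_in by (auto simp: prod_eq_iff intro: order_antisym)
  qed
  then have pss: "pss l = pss' l" if "l \<in> {1..<d}" for l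
    using that stack_profile[OF stack dim that] stack_profile[OF stack' dim that] k
    by (intro nth_equalityI) (auto simp: profiles_def)
  have "pss \<in> Pi\<^sub>E {1..<d} (\<lambda>_. profiles k)" "pss' \<in> Pi\<^sub>E {1..<d} (\<lambda>_. profiles k)"
    using stack stack' k by (simp_all add: stacks_def)
  then have "pss = pss'"
    using pss by (rule PiE_ext)
  with k show ?thesis
    by simp
qed

lemma translate_iff: "y \<in> translate v Q \<longleftrightarrow> (\<lambda>j. y j - v j) \<in> Q"
  unfolding translate_def
proof
  assume "(\<lambda>j. y j - v j) \<in> Q"
  then show "y \<in> (\<lambda>x j. x j + v j) ` Q"
    by (rule rev_image_eqI) simp
qed auto

lemma translate_translate: "translate v (translate w Q) = translate (\<lambda>j. v j + w j) Q"
  by (simp add: translate_def image_image add.assoc add.commute[of "w _"])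

lemma translate_zero: "translate (\<lambda>_. 0) Q = Q"
  by (simp add: translate_def)

lemma lateral_area_translate: "lateral_area d (translate v Q) = lateral_area d Q"
  unfolding lateral_area_def
proof (rule sum.cong[OF refl])
  fix l
  have "(\<lambda>x. (x 0, x l)) ` translate v Q = (\<lambda>(a, b). (a + v 0, b + v l)) ` (\<lambda>x. (x 0, x l)) ` Q"
    by (simp add: translate_def image_image)
  also have "card \<dots> = card ((\<lambda>x. (x 0, x l)) ` Q)"
    by (rule card_image) (auto simp: inj_on_def)
  finally show "card ((\<lambda>x. (x 0, x l)) ` translate v Q) = card ((\<lambda>x. (x 0, x l)) ` Q)" .
qed

lemma trans_class_translate:
  assumes "v \<in> cells d"
  shows "trans_class d (translate v Q) = trans_class d Q"
proof -
  have "translate w (translate v Q) \<in> trans_class d Q" if "w \<in> cells d" for w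
    unfolding trans_class_def translate_translate
    using that assms by (intro CollectI bexI[of _ "\<lambda>j. w j + v j"]) (auto simp: cells_def)
  moreover have "translate w Q \<in> trans_class d (translate v Q)" if "w \<in> cells d" for w
  proof -
    have "translate w Q = translate (\<lambda>j. w j - v j) (translate v Q)"
      by (simp add: translate_translate)
    with that assms show ?thesis
      unfolding trans_class_def
      by (intro CollectI bexI[of _ "\<lambda>j. w j - v j"]) (auto simp: cells_def)
  qed
  ultimately show ?thesis
    by (auto simp: trans_class_def)
qed

text \<open>The translation relating two such sets moves the origin into the orthant and back, so it
  vanishes.\<close>

lemma trans_class_eq_imp_eq:
  assumes "(\<lambda>_. 0) \<in> Q" and "\<forall>x\<in>Q. \<forall>j. 0 \<le> x j"
    and "(\<lambda>_. 0) \<in> Q'" and "\<forall>x\<in>Q'. \<forall>j. 0 \<le> x j"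
    and "trans_class d Q = trans_class d Q'"
  shows "Q = Q'"
proof -
  have "Q' \<in> trans_class d Q'"
    unfolding trans_class_def
    by (intro CollectI bexI[of _ "\<lambda>_. 0"]) (simp_all add: translate_zero cells_def)
  then have "Q' \<in> trans_class d Q"
    using assms(5) by simp
  then obtain v where v: "Q' = translate v Q"
    by (auto simp: trans_class_def)
  have "v j \<le> 0" for j
  proof -
    from assms(3) v obtain x where "x \<in> Q" "(\<lambda>_. 0) = (\<lambda>j. x j + v j)"
      by (auto simp: translate_def)
    then have "x j + v j = 0" "0 \<le> x j"
      using assms(2) by (simp_all add: fun_eq_iff)
    then show ?thesis
      by linarith
  qed
  moreover have "v \<in> Q'"
    using v assms(1) by (simp add: translate_iff)
  with assms(4) have "0 \<le> v j" for j
    by blast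
  ultimately have "v = (\<lambda>_. 0)"
    by (simp add: fun_eq_iff order_antisym)
  with v show ?thesis
    by (simp add: translate_zero)
qed

section \<open>Decomposition of directed plateau polyhypercubes\<close>

lemma directed_layers:
  assumes "finite P" and "r \<in> P" and reach: "\<forall>x\<in>P. (directed_step d P)\<^sup>*\<^sup>* r x"
  obtains k where "\<And>x. x \<in> P \<Longrightarrow> r 0 \<le> x 0 \<and> x 0 < r 0 + int k"
    and "\<And>c. c < k \<Longrightarrow> r 0 + int c \<in> (\<lambda>x. x 0) ` P"
proof
  define M where "M = Max ((\<lambda>x. x 0) ` P)"
  show bound: "r 0 \<le> x 0 \<and> x 0 < r 0 + int (nat (M - r 0) + 1)" if "x \<in> P" for x
  proof -
    have "r 0 \<le> x 0"
      using reach that directed_path_mono by blast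
    moreover have "x 0 \<le> M"
      using assms(1) that by (simp add: M_def)
    ultimately show ?thesis
      by simp
  qed
  fix c
  assume c: "c < nat (M - r 0) + 1"
  have "M \<in> (\<lambda>x. x 0) ` P"
    unfolding M_def by (rule Max_in) (use assms(1,2) in auto)
  then obtain x where x: "x \<in> P" "x 0 = M"
    by auto
  moreover have "r 0 + int c \<le> M"
    using c bound[OF x(1)] x(2) by linarith
  ultimately have "\<exists>y\<in>P. y 0 = r 0 + int c"
    using directed_path_meets_layer[of d P r x "r 0 + int c"] assms(2) reach by simp
  then show "r 0 + int c \<in> (\<lambda>x. x 0) ` P"
    by (metis image_eqI)
qed

lemma plateau_bounds:
  assumes "\<And>c. c < k \<Longrightarrow> is_plateau d (f c) (S c)"
  obtains A B where "\<And>c. c < k \<Longrightarrow>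
    S c = {x \<in> cells d. x 0 = f c \<and> (\<forall>l. 1 \<le> l \<and> l < d \<longrightarrow> A c l \<le> x l \<and> x l \<le> B c l)}"
proof -
  have "\<forall>c. \<exists>ab. c < k \<longrightarrow>
      S c = {x \<in> cells d. x 0 = f c \<and> (\<forall>l. 1 \<le> l \<and> l < d \<longrightarrow> fst ab l \<le> x l \<and> x l \<le> snd ab l)}"
  proof
    fix c
    show "\<exists>ab. c < k \<longrightarrow>
      S c = {x \<in> cells d. x 0 = f c \<and> (\<forall>l. 1 \<le> l \<and> l < d \<longrightarrow> fst ab l \<le> x l \<and> x l \<le> snd ab l)}"
    proof (cases "c < k")
      case True
      with assms obtain a b where
        "S c = {x \<in> cells d. x 0 = f c \<and> (\<forall>l. 1 \<le> l \<and> l < d \<longrightarrow> a l \<le> x l \<and> x l \<le> b l)}"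
        unfolding is_plateau_def by blast
      then show ?thesis
        by (intro exI[of _ "(a, b)"]) simp
    qed simp
  qed
  from choice[OF this] obtain ab where "\<forall>c. c < k \<longrightarrow> S c = {x \<in> cells d.
      x 0 = f c \<and> (\<forall>l. 1 \<le> l \<and> l < d \<longrightarrow> fst (ab c) l \<le> x l \<and> x l \<le> snd (ab c) l)}"
    by blast
  with that[of "\<lambda>c. fst (ab c)" "\<lambda>c. snd (ab c)"] show thesis
    by blast
qed

lemma directed_plateau_strata:
  assumes "directed_plateau d P"
  obtains r k A B where "r \<in> P" and "\<forall>x\<in>P. (directed_step d P)\<^sup>*\<^sup>* r x" and "P \<subseteq> cells d"
    and "\<And>x. x \<in> cells d \<Longrightarrow> x \<in> P \<longleftrightarrow> r 0 \<le> x 0 \<and> x 0 < r 0 + int k \<and>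
           (\<forall>l \<in> {1..<d}. A (nat (x 0 - r 0)) l \<le> x l \<and> x l \<le> B (nat (x 0 - r 0)) l)"
    and "\<And>c l. c < k \<Longrightarrow> l \<in> {1..<d} \<Longrightarrow> A c l \<le> B c l"
proof -
  from assms obtain r where r: "r \<in> P" and reach: "\<forall>x\<in>P. (directed_step d P)\<^sup>*\<^sup>* r x"
    and fin: "finite P" and cells: "P \<subseteq> cells d"
    and plateau: "\<forall>c \<in> (\<lambda>x. x 0) ` P. is_plateau d c (stratum P c)"
    by (auto simp: directed_plateau_def directed_iff polyhypercube_def)
  obtain k where bound: "\<And>x. x \<in> P \<Longrightarrow> r 0 \<le> x 0 \<and> x 0 < r 0 + int k"
    and layer: "\<And>c. c < k \<Longrightarrow> r 0 + int c \<in> (\<lambda>x. x 0) ` P"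
    using directed_layers[OF fin r reach] by blast
  obtain A B where strata: "\<And>c. c < k \<Longrightarrow> stratum P (r 0 + int c) = {x \<in> cells d.
      x 0 = r 0 + int c \<and> (\<forall>l. 1 \<le> l \<and> l < d \<longrightarrow> A c l \<le> x l \<and> x l \<le> B c l)}"
    using plateau_bounds[of k d "\<lambda>c. r 0 + int c" "\<lambda>c. stratum P (r 0 + int c)"] layer plateau
    by blast
  have member: "x \<in> P \<longleftrightarrow> r 0 \<le> x 0 \<and> x 0 < r 0 + int k \<and>
      (\<forall>l \<in> {1..<d}. A (nat (x 0 - r 0)) l \<le> x l \<and> x l \<le> B (nat (x 0 - r 0)) l)"
    if "x \<in> cells d" for x
  proof (cases "r 0 \<le> x 0 \<and> x 0 < r 0 + int k")
    case True
    define c where "c = nat (x 0 - r 0)"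
    with True have c: "c < k" "x 0 = r 0 + int c"
      by auto
    then have "x \<in> P \<longleftrightarrow> x \<in> stratum P (r 0 + int c)"
      by (simp add: stratum_def)
    also have "\<dots> \<longleftrightarrow> (\<forall>l \<in> {1..<d}. A c l \<le> x l \<and> x l \<le> B c l)"
      using strata c that by auto
    finally show ?thesis
      using True by (simp add: c_def)
  qed (use bound in blast)
  have "A c l \<le> B c l" if c: "c < k" and l: "l \<in> {1..<d}" for c l
  proof -
    obtain y where y: "y \<in> P" "y 0 = r 0 + int c"
      using layer[OF c] by auto
    then have "nat (y 0 - r 0) = c"
      by simp
    with y member[of y] cells l have "A c l \<le> y l \<and> y l \<le> B c l"
      by blast
    then show ?thesis
      by linarith
  qed
  with r reach cells member show ?thesis
    using that by blast
qed

context
  fixes d :: nat and P :: "(nat \<Rightarrow> int) set" and r :: "nat \<Rightarrow> int" and k :: nat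
    and A B :: "nat \<Rightarrow> nat \<Rightarrow> int"
  assumes root: "r \<in> P" and reach: "\<forall>x\<in>P. (directed_step d P)\<^sup>*\<^sup>* r x"
    and P_cells: "P \<subseteq> cells d"
    and strata: "\<And>x. x \<in> cells d \<Longrightarrow> x \<in> P \<longleftrightarrow> r 0 \<le> x 0 \<and> x 0 < r 0 + int k \<and>
           (\<forall>l \<in> {1..<d}. A (nat (x 0 - r 0)) l \<le> x l \<and> x l \<le> B (nat (x 0 - r 0)) l)"
    and bounds: "\<And>c l. c < k \<Longrightarrow> l \<in> {1..<d} \<Longrightarrow> A c l \<le> B c l"
    and dim: "0 < d"
begin

lemma strata_width: "0 < k"
  using strata[of r] root P_cells by auto

lemma strata_lower_corner: "c < k \<Longrightarrow> corner d (r 0 + int c) (A c) \<in> P"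
  using strata[of "corner d (r 0 + int c) (A c)"] bounds dim by (auto simp: corner_def cells_def)

lemma strata_lower_0: "l \<in> {1..<d} \<Longrightarrow> A 0 l = r l"
proof -
  assume l: "l \<in> {1..<d}"
  have "A 0 l \<le> r l"
    using strata[of r] root P_cells l by auto
  moreover have "r l \<le> corner d (r 0) (A 0) l"
    using directed_path_mono reach strata_lower_corner[OF strata_width] by force
  ultimately show ?thesis
    using l by (simp add: corner_def)
qed

text \<open>The lower corner of plateau \<open>c + 1\<close> is reached from the root, so it has a predecessor in
  \<open>P\<close>. A predecessor along a lateral axis would lie in plateau \<open>c + 1\<close> below its lower bound, so
  the last step is along the first axis and the predecessor lies in plateau \<open>c\<close>.\<close>

lemma strata_lower_Suc:
  assumes c: "Suc c < k" and l: "l \<in> {1..<d}"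
  shows "A c l \<le> A (Suc c) l \<and> A (Suc c) l \<le> B c l"
proof -
  define z where "z = corner d (r 0 + int (Suc c)) (A (Suc c))"
  have "(directed_step d P)\<^sup>*\<^sup>* r z" "z \<noteq> r"
    using reach strata_lower_corner[OF c]
    by (auto simp: z_def corner_def fun_eq_iff dest: spec[of _ 0])
  then obtain y where "directed_step d P y z"
    by (metis converse_rtranclpE rtranclp.cases)
  then obtain i where y: "y \<in> P" "y \<in> cells d" and i: "i < d" and z: "z = step i y"
    using P_cells by (auto simp: directed_step_def)
  have y_eq: "y j = z j - (if j = i then 1 else 0)" for j
    using z by (simp add: step_apply)
  show ?thesis
  proof (cases "i = 0")
    case True
    then have "y 0 = r 0 + int c" "y l = A (Suc c) l"
      using l by (simp_all add: y_eq z_def corner_def)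
    moreover from this(1) y strata[of y] have "\<forall>l \<in> {1..<d}. A c l \<le> y l \<and> y l \<le> B c l"
      by simp
    ultimately show ?thesis
      using l by (metis (no_types, lifting))
  next
    case False
    then have "nat (y 0 - r 0) = Suc c" "y i = A (Suc c) i - 1"
      using i by (simp_all add: y_eq z_def corner_def)
    moreover have "A (nat (y 0 - r 0)) i \<le> y i"
      using y strata[of y] i False by simp
    ultimately show ?thesis
      by simp
  qed
qed

lemma strata_stack:
  defines "pss \<equiv> \<lambda>l \<in> {1..<d}. map (\<lambda>c. (A c l - r l, B c l - r l)) [0..<k]"
  shows "(k, pss) \<in> stacks d" and "P = translate r (plateau_stack d k pss)"
proof -
  have nth: "pss l ! c = (A c l - r l, B c l - r l)" if "l \<in> {1..<d}" "c < k" for l c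
    using that by (simp add: pss_def)
  have "pss l \<in> profiles k" if l: "l \<in> {1..<d}" for l
  proof -
    have "length (pss l) = k"
      using l by (simp add: pss_def)
    moreover have "interval_chain (pss l)"
      using l nth bounds strata_lower_Suc by (simp add: interval_chain_iff_nth \<open>length (pss l) = k\<close>)
    moreover have "fst (hd (pss l)) = 0"
      using l strata_width strata_lower_0 by (simp add: pss_def hd_map upt_conv_Cons)
    ultimately show ?thesis
      by (simp add: profiles_def)
  qed
  then show "(k, pss) \<in> stacks d"
    using strata_width by (simp add: stacks_def pss_def)
  have r: "r \<in> cells d"
    using root P_cells by blast
  show "P = translate r (plateau_stack d k pss)"
  proof (rule set_eqI)
    fix x
    show "x \<in> P \<longleftrightarrow> x \<in> translate r (plateau_stack d k pss)"
    proof (cases "x \<in> cells d \<and> r 0 \<le> x 0 \<and> x 0 < r 0 + int k")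
      case True
      then have "nat (x 0 - r 0) < k"
        by auto
      with True r show ?thesis
        using strata[of x] nth by (auto simp: translate_iff plateau_stack_def cells_def)
    next
      case False
      then have "x \<notin> P"
        using strata[of x] P_cells by auto
      moreover have "(\<lambda>j. x j - r j) \<notin> plateau_stack d k pss"
        using False r by (auto simp: plateau_stack_def cells_def)
      ultimately show ?thesis
        by (simp add: translate_iff)
    qed
  qed
qed

end

lemma directed_plateau_translate_stack:
  assumes "directed_plateau d P" and "0 < d"
  obtains k pss r where "(k, pss) \<in> stacks d" and "r \<in> cells d"
    and "P = translate r (plateau_stack d k pss)"
proof (rule directed_plateau_strata[OF assms(1)])
  fix r k A B
  assume strata: "r \<in> P" "\<forall>x\<in>P. (directed_step d P)\<^sup>*\<^sup>* r x" "P \<subseteq> cells d"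
    "\<And>x. x \<in> cells d \<Longrightarrow> x \<in> P \<longleftrightarrow> r 0 \<le> x 0 \<and> x 0 < r 0 + int k \<and>
       (\<forall>l \<in> {1..<d}. A (nat (x 0 - r 0)) l \<le> x l \<and> x l \<le> B (nat (x 0 - r 0)) l)"
    "\<And>c l. c < k \<Longrightarrow> l \<in> {1..<d} \<Longrightarrow> A c l \<le> B c l"
  note stack = strata_stack[OF strata assms(2)]
  show thesis
    using that[OF stack(1) _ stack(2)] strata(1,3) by blast
qed

lemma bij_betw_stacks_trans_classes:
  assumes "0 < d"
  shows "bij_betw (\<lambda>(k, pss). trans_class d (plateau_stack d k pss))
    {(k, pss) \<in> stacks d. stack_area d pss = n}
    (trans_class d ` {P. directed_plateau d P \<and> lateral_area d P = n})"
    (is "bij_betw ?f ?S ?C")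
proof (rule bij_betw_imageI)
  show "inj_on ?f ?S"
  proof (rule inj_onI, clarify)
    fix k pss k' pss'
    assume stack: "(k, pss) \<in> stacks d" and stack': "(k', pss') \<in> stacks d"
      and "trans_class d (plateau_stack d k pss) = trans_class d (plateau_stack d k' pss')"
    then have "plateau_stack d k pss = plateau_stack d k' pss'"
      using zero_in_stack stack_nonneg assms by (intro trans_class_eq_imp_eq) auto
    with stack stack' assms show "k = k' \<and> pss = pss'"
      by (rule plateau_stack_inj)
  qed
  show "?f ` ?S = ?C"
  proof (intro equalityI subsetI)
    fix Z
    assume "Z \<in> ?f ` ?S"
    then obtain k pss where "(k, pss) \<in> stacks d" "stack_area d pss = n"
      and "Z = trans_class d (plateau_stack d k pss)"
      by auto
    with assms directed_plateau_stack lateral_area_stack show "Z \<in> ?C"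
      by blast
  next
    fix Z
    assume "Z \<in> ?C"
    then obtain P where P: "directed_plateau d P" "lateral_area d P = n"
      and Z: "Z = trans_class d P"
      by auto
    obtain k pss r where stack: "(k, pss) \<in> stacks d" and "r \<in> cells d"
      and "P = translate r (plateau_stack d k pss)"
      using directed_plateau_translate_stack[OF P(1) assms] .
    then have "Z = trans_class d (plateau_stack d k pss)" "stack_area d pss = n"
      using Z P(2) trans_class_translate lateral_area_translate lateral_area_stack[OF stack assms]
      by simp_all
    with stack show "Z \<in> ?f ` ?S"
      by force
  qed
qed

lemma dpp_count_eq_card_stacks:
  assumes "0 < d"
  shows "dpp_count d n = card {(k, pss) \<in> stacks d. stack_area d pss = n}"
  using bij_betw_same_card[OF bij_betw_stacks_trans_classes[OF assms]] by (simp add: dpp_count_def)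

lemma width_le_stack_area:
  assumes "(k, pss) \<in> stacks d" and "2 \<le> d"
  shows "k \<le> stack_area d pss"
proof -
  have "pss 1 \<in> profiles k"
    using assms by (auto simp: stacks_def)
  then have "k \<le> profile_area (pss 1)"
    using length_le_profile_area by (auto simp: profiles_def)
  also have "\<dots> \<le> stack_area d pss"
    unfolding stack_area_def using assms(2) by (intro member_le_sum) auto
  finally show ?thesis .
qed

lemma card_stacks_eq_sum_widths:
  assumes "2 \<le> d"
  shows "card {(k, pss) \<in> stacks d. stack_area d pss = n} =
    (\<Sum>j<n. card {pss \<in> Pi\<^sub>E {1..<d} (\<lambda>_. profiles (Suc j)). stack_area d pss = n})"
proof -
  have fibres: "finite {pss \<in> Pi\<^sub>E {1..<d} (\<lambda>_. profiles k). stack_area d pss = n}"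
    if "1 \<le> k" for k
  proof -
    have "finite_fibres (Pi\<^sub>E {1..<d} (\<lambda>_. profiles (Suc (k - 1)))) (stack_area d)"
      unfolding stack_area_def[abs_def] by (intro finite_fibres_PiE finite_fibres_profiles) simp
    with that show ?thesis
      by (simp add: finite_fibres_def)
  qed
  have "{(k, pss) \<in> stacks d. stack_area d pss = n} =
      (SIGMA k:{1..n}. {pss \<in> Pi\<^sub>E {1..<d} (\<lambda>_. profiles k). stack_area d pss = n})"
    using width_le_stack_area[OF _ assms] by (auto simp: stacks_def)
  then have "card {(k, pss) \<in> stacks d. stack_area d pss = n} =
      (\<Sum>k\<in>{1..n}. card {pss \<in> Pi\<^sub>E {1..<d} (\<lambda>_. profiles k). stack_area d pss = n})"
    using fibres by simp
  then show ?thesis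
    by (simp add: sum.atLeast1_atMost_eq)
qed

lemma weight_gf_stacks_of_width:
  "weight_gf (Pi\<^sub>E {1..<d} (\<lambda>_. profiles (Suc j))) (stack_area d) =
    (weight_gf UNIV Suc :: 'a::comm_semiring_1 fps) ^ (d - 1) *
    (weight_gf nested_pairs (Suc \<circ> fst) ^ (d - 1)) ^ j"
  unfolding stack_area_def[abs_def]
  by (simp add: weight_gf_PiE finite_fibres_profiles weight_gf_profiles power_mult_distrib
      mult.commute[of j] flip: power_mult)

theorem theorem4:
  fixes d :: nat
  assumes "d \<ge> 3"
  shows "Abs_fps (\<lambda>n. of_nat (dpp_count d n) :: rat) =
    fps_X ^ (d - 1) * (1 - fps_X) ^ (d - 1) / ((1 - fps_X) ^ (2 * (d - 1)) - fps_X ^ (d - 1))"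
proof -
  define A :: "rat fps" where "A = weight_gf UNIV Suc ^ (d - 1)"
  define B :: "rat fps" where "B = weight_gf nested_pairs (Suc \<circ> fst) ^ (d - 1)"
  have width: "A * B ^ j = weight_gf (Pi\<^sub>E {1..<d} (\<lambda>_. profiles (Suc j))) (stack_area d)" for j
    unfolding A_def B_def by (rule weight_gf_stacks_of_width[symmetric])
  have "of_nat (dpp_count d n) = (\<Sum>j<n. (A * B ^ j) $ n)" for n
    using assms
    by (simp add: dpp_count_eq_card_stacks card_stacks_eq_sum_widths width weight_gf_nth)
  moreover have "A * (1 - fps_X) ^ (d - 1) = fps_X ^ (d - 1)"
    by (simp add: A_def weight_gf_Suc flip: power_mult_distrib)
  moreover have "B * (1 - fps_X) ^ (2 * (d - 1)) = fps_X ^ (d - 1)"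
    by (simp add: B_def weight_gf_nested_pair power_mult flip: power_mult_distrib)
  ultimately show ?thesis
    using assms fps_geometric_series_closed_form[of "d - 1" A B] by simp
qed

end
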